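(* Let $\alpha>\beta$ be positive integers, let $k\geq 2$, and let $n_1,\dots,n_k$ be integers with $n_1,n_2\geq 2\alpha+1$ and $n_3,\dots,n_k\geq \alpha+\beta-1$. If an $(\alpha,\beta)$-tour on the $n_1\times n_2$ chessboard exists, then an $(\alpha,\beta)$-tour on the $n_1\times n_2\times\cdots\times n_k$ chessboard exists.
   Context: The $n_1\times\cdots\times n_d$ chessboard is $\{1,\dots,n_1\}\times\cdots\times\{1,\dots,n_d\}\subset\mathbb{Z}^d$. An $(\alpha,\beta)$-move is a vector in $\mathbb{Z}^d$ with exactly $d-2$ coordinates equal to $0$, exactly one coordinate in $\{\pm\alpha\}$ and exactly one coordinate in $\{\pm\beta\}$. Two cells are adjacent iff their difference is an $(\alpha,\beta)$-move. An $(\alpha,\beta)$-tour is a Hamiltonian cycle in this graph. *)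

theory Defs
  imports Main
begin

definition board :: "int list \<Rightarrow> int list set" where
  "board ns = {x. length x = length ns \<and> (\<forall>i<length ns. 1 \<le> x ! i \<and> x ! i \<le> ns ! i)}"

definition ab_move :: "int \<Rightarrow> int \<Rightarrow> nat \<Rightarrow> int list \<Rightarrow> bool" where
  "ab_move a b d v \<longleftrightarrow> length v = d \<and> 2 \<le> d \<and>
     card {i. i < d \<and> v ! i = 0} = d - 2 \<and>
     card {i. i < d \<and> (v ! i = a \<or> v ! i = - a)} = 1 \<and>
     card {i. i < d \<and> (v ! i = b \<or> v ! i = - b)} = 1"

definition ab_adj :: "int \<Rightarrow> int \<Rightarrow> nat \<Rightarrow> int list \<Rightarrow> int list \<Rightarrow> bool" where
  "ab_adj a b d x y \<longleftrightarrow> ab_move a b d (map2 (-) y x)"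

(* An (alpha,beta)-tour: a Hamiltonian cycle of the adjacency graph on the board,
   given as a cyclic list of all cells, each exactly once, with consecutive cells
   (including last -> first) adjacent; a cycle has at least 3 vertices. *)
definition ab_tour :: "int \<Rightarrow> int \<Rightarrow> int list \<Rightarrow> int list list \<Rightarrow> bool" where
  "ab_tour a b ns c \<longleftrightarrow> distinct c \<and> set c = board ns \<and> 3 \<le> length c \<and>
     (\<forall>i<length c. ab_adj a b (length ns) (c ! i) (c ! ((i + 1) mod length c)))"

definition has_ab_tour :: "int \<Rightarrow> int \<Rightarrow> int list \<Rightarrow> bool" where
  "has_ab_tour a b ns \<longleftrightarrow> (\<exists>c. ab_tour a b ns c)"

end

theory Submission
  imports Defs
begin

text \<open>
  Call a tour good if it contains two pairs of tour edges that are translates of each other by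
  \<open>\<beta>\<close> along a coordinate axis, two pairs that are translates by \<open>\<alpha>\<close>, and these eight edges
  are distinct. A planar tour on a board with both sides at least \<open>2\<alpha> + 1\<close> is good: at a
  corner both tour edges are forced, and together with a tour edge at the cell \<open>\<beta>\<close> (or \<open>\<alpha>\<close>)
  steps along a side they yield a \<open>\<beta>\<close>-pair (or an \<open>\<alpha>\<close>-pair); two corners serve each kind.

  From a good tour on a board \<open>B\<close> we build one on \<open>B \<times> {1..m}\<close>, \<open>m \<ge> \<alpha> + \<beta> - 1\<close>, by
  splicing in copies of it one layer at a time. If \<open>{x, y}\<close> and \<open>{x', y'}\<close> are
  \<open>\<beta>\<close>-translates, deleting \<open>{x, y}\<close> in layer \<open>j\<close> and \<open>{x', y'}\<close> in layer \<open>j + \<alpha>\<close> and adding the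
  moves \<open>x \<mapsto> x'\<close>, \<open>y \<mapsto> y'\<close> merges the two cycles; an \<open>\<alpha>\<close>-pair likewise attaches layer \<open>j - \<beta>\<close>.
  As a planar tour forces \<open>gcd \<alpha> \<beta> = 1\<close>, the layers \<open>(k + 1)\<alpha> mod (\<alpha> + \<beta>)\<close> run through
  \<open>1, \<dots>, \<alpha> + \<beta> - 1\<close> by steps \<open>+\<alpha>\<close> and \<open>-\<beta>\<close>; afterwards layer \<open>M + 1\<close> is attached to layer
  \<open>M + 1 - \<alpha>\<close>. Only one pair of each kind is ever cut, so the copies of the other two pairs in
  layers 1 and 2 make the new tour good again, and induction on the dimension finishes the proof.
\<close>

section \<open>Cycles and paths as lists\<close>

fun path_edges :: "'a list \<Rightarrow> 'a set set" where
  "path_edges (x # y # zs) = insert {x, y} (path_edges (y # zs))"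
| "path_edges _ = {}"

lemma path_edges_Cons: "xs \<noteq> [] \<Longrightarrow> path_edges (x # xs) = insert {x, hd xs} (path_edges xs)"
  by (cases xs) auto

lemma path_edges_append:
  "xs \<noteq> [] \<Longrightarrow> ys \<noteq> [] \<Longrightarrow> path_edges (xs @ ys) = insert {last xs, hd ys} (path_edges xs \<union> path_edges ys)"
  by (induction xs rule: path_edges.induct) (auto simp: path_edges_Cons)

lemma path_edges_rev [simp]: "path_edges (rev xs) = path_edges xs"
proof (induction xs)
  case (Cons x xs)
  then show ?case
    by (cases "xs = []") (simp_all add: path_edges_append path_edges_Cons last_rev insert_commute)
qed simp

lemma path_edges_map: "path_edges (map f xs) = (`) f ` path_edges xs"
  by (induction xs rule: path_edges.induct) auto

lemma path_edges_split: "e \<in> path_edges xs \<Longrightarrow> \<exists>us u v vs. xs = us @ u # v # vs \<and> e = {u, v}"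
proof (induction xs rule: path_edges.induct)
  case (1 x y zs)
  show ?case
  proof (cases "e = {x, y}")
    case True
    then show ?thesis by (intro exI[of _ "[]"]) auto
  next
    case False
    with "1.prems" obtain us u v vs where "y # zs = us @ u # v # vs" "e = {u, v}"
      using "1.IH" by auto
    then show ?thesis by (intro exI[of _ "x # us"]) auto
  qed
qed simp_all

lemma path_edges_subset: "e \<in> path_edges xs \<Longrightarrow> e \<subseteq> set xs"
  by (auto dest: path_edges_split)

lemma path_edges_adj:
  assumes "successively R xs" "symp R" "{x, y} \<in> path_edges xs"
  shows "R x y"
  using assms
proof (induction xs rule: path_edges.induct)
  case (1 u v zs)
  then show ?case by (auto simp: doubleton_eq_iff dest: sympD)
qed simp_all

lemma successively_imp_const:
  assumes "successively R xs" "\<And>x y. x \<in> set xs \<Longrightarrow> y \<in> set xs \<Longrightarrow> R x y \<Longrightarrow> f x = f y"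
    "x \<in> set xs"
  shows "f x = f (hd xs)"
  using assms
proof (induction xs)
  case (Cons y ys)
  show ?case
  proof (cases "x = y")
    case False
    with Cons.prems have "ys \<noteq> []" "f x = f (hd ys)"
      using Cons.IH by (auto simp: successively_Cons)
    moreover have "f y = f (hd ys)"
      using Cons.prems \<open>ys \<noteq> []\<close> by (auto simp: successively_Cons)
    ultimately show ?thesis by simp
  qed simp
qed simp

definition is_cycle :: "('a \<Rightarrow> 'a \<Rightarrow> bool) \<Rightarrow> 'a list \<Rightarrow> bool" where
  "is_cycle R c \<longleftrightarrow> distinct c \<and> 3 \<le> length c \<and> successively R (c @ [hd c])"

definition cycle_edges :: "'a list \<Rightarrow> 'a set set" where
  "cycle_edges c = path_edges (c @ [hd c])"

lemma cycle_edges_conv_path_edges: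
  "c \<noteq> [] \<Longrightarrow> cycle_edges c = insert {last c, hd c} (path_edges c)"
  by (simp add: cycle_edges_def path_edges_append)

lemma successively_snoc_hd_conv_nth:
  assumes "c \<noteq> []"
  shows "successively R (c @ [hd c]) \<longleftrightarrow> (\<forall>i<length c. R (c ! i) (c ! ((i + 1) mod length c)))"
proof -
  have "(c @ [hd c]) ! Suc i = c ! ((i + 1) mod length c)" if "i < length c" for i
  proof (cases "Suc i < length c")
    case False
    with that have "Suc i = length c" by simp
    then show ?thesis using assms by (simp add: nth_append hd_conv_nth)
  qed (simp add: nth_append)
  then show ?thesis
    by (auto simp: successively_conv_nth nth_append)
qed

lemma ab_tour_iff_is_cycle:
  "ab_tour a b ns c \<longleftrightarrow> is_cycle (ab_adj a b (length ns)) c \<and> set c = board ns"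
  by (cases "c = []") (auto simp: ab_tour_def is_cycle_def successively_snoc_hd_conv_nth)

lemma successively_cycle_append:
  assumes "us \<noteq> []" "vs \<noteq> []"
  shows "successively R (us @ vs @ [hd us]) \<longleftrightarrow>
    successively R us \<and> successively R vs \<and> R (last us) (hd vs) \<and> R (last vs) (hd us)"
  using assms by (auto simp: successively_append_iff)

lemma cycle_edges_append:
  assumes "us \<noteq> []" "vs \<noteq> []"
  shows "cycle_edges (us @ vs) = {{last us, hd vs}, {last vs, hd us}} \<union> path_edges us \<union> path_edges vs"
  using assms by (auto simp: cycle_edges_def path_edges_append)

lemma is_cycle_append_swap: "is_cycle R (us @ vs) \<Longrightarrow> is_cycle R (vs @ us)"
  by (cases "us = [] \<or> vs = []") (auto simp: is_cycle_def successively_cycle_append)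

lemma cycle_edges_append_swap: "cycle_edges (vs @ us) = cycle_edges (us @ vs)"
  by (cases "us = [] \<or> vs = []") (auto simp: cycle_edges_append)

lemma cycle_edges_map: "cycle_edges (map f c) = (`) f ` cycle_edges c"
proof (cases "c = []")
  case False
  then have "map f c @ [hd (map f c)] = map f (c @ [hd c])" by (simp add: hd_map)
  then show ?thesis by (simp only: cycle_edges_def path_edges_map)
qed (simp add: cycle_edges_def)

lemma cycle_edges_subset: "e \<in> cycle_edges c \<Longrightarrow> e \<subseteq> set c"
  using path_edges_subset[of e "c @ [hd c]"] by (cases c) (auto simp: cycle_edges_def)

lemma cycle_edges_adj: "is_cycle R c \<Longrightarrow> symp R \<Longrightarrow> {x, y} \<in> cycle_edges c \<Longrightarrow> R x y"
  unfolding is_cycle_def cycle_edges_def by (blast intro: path_edges_adj)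

lemma cycle_edge_rotation:
  assumes "e \<in> cycle_edges c"
  shows "\<exists>A B. c = A @ B \<and> A \<noteq> [] \<and> e = {last A, hd (B @ A)}"
proof -
  obtain us u v vs where split: "c @ [hd c] = us @ u # v # vs" and e: "e = {u, v}"
    using assms path_edges_split unfolding cycle_edges_def by blast
  show ?thesis
  proof (cases vs rule: rev_cases)
    case Nil
    with split have "c = us @ [u]" "hd c = v" by auto
    then show ?thesis using e by (intro exI[of _ c] exI[of _ "[]"]) auto
  next
    case (snoc ws w)
    with split have "c = (us @ [u]) @ v # ws" by auto
    then show ?thesis using e by (intro exI[of _ "us @ [u]"] exI[of _ "v # ws"]) auto
  qed
qed

lemma cycle_open_at_edge:
  assumes c: "is_cycle R c" and "symp R" and xy: "{x, y} \<in> cycle_edges c"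
  obtains P where "successively R P" "distinct P" "set P = set c" "length P = length c"
    "hd P = y" "last P = x" "cycle_edges c - {{x, y}} \<subseteq> path_edges P"
proof -
  obtain A B where AB: "c = A @ B" "A \<noteq> []" and e: "{x, y} = {last A, hd (B @ A)}"
    using cycle_edge_rotation[OF xy] by blast
  define c' where "c' = B @ A"
  have c': "is_cycle R c'" "cycle_edges c' = cycle_edges c" "set c' = set c" "length c' = length c"
    using c is_cycle_append_swap[of R A B] cycle_edges_append_swap[of B A] by (auto simp: c'_def AB)
  have "c' \<noteq> []" "last c' = last A" "hd c' = hd (B @ A)" using AB by (simp_all add: c'_def)
  then have "cycle_edges c = insert {x, y} (path_edges c')"
    using c'(2) e cycle_edges_conv_path_edges[of c'] by simp
  then have edges: "cycle_edges c - {{x, y}} \<subseteq> path_edges c'" by blast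
  have path: "successively R c'" "distinct c'"
    using c' by (auto simp: is_cycle_def successively_append_iff)
  show ?thesis
  proof (cases "last c' = x \<and> hd c' = y")
    case True
    then show ?thesis using that path c' edges by blast
  next
    case False
    with e \<open>last c' = last A\<close> \<open>hd c' = hd (B @ A)\<close> have "hd (rev c') = y" "last (rev c') = x"
      by (auto simp: doubleton_eq_iff hd_rev last_rev)
    moreover have "successively R (rev c')"
      using path \<open>symp R\<close> by (auto intro: successively_mono dest: sympD)
    ultimately show ?thesis using that[of "rev c'"] path c' edges by simp
  qed
qed

lemma cycle_merge:
  assumes c: "is_cycle R c" and d: "is_cycle R d" and "symp R" and disj: "set c \<inter> set d = {}"
    and xy: "{x, y} \<in> cycle_edges c" and pq: "{p, q} \<in> cycle_edges d" and "R x p" "R y q"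
  obtains e where "is_cycle R e" "set e = set c \<union> set d"
    "cycle_edges c - {{x, y}} \<subseteq> cycle_edges e" "cycle_edges d - {{p, q}} \<subseteq> cycle_edges e"
proof -
  obtain P where P: "successively R P" "distinct P" "set P = set c" "length P = length c"
    "hd P = y" "last P = x" "cycle_edges c - {{x, y}} \<subseteq> path_edges P"
    using cycle_open_at_edge[OF c \<open>symp R\<close> xy] .
  have qp: "{q, p} \<in> cycle_edges d" "{q, p} = {p, q}" using pq by (simp_all add: insert_commute)
  obtain Q where Q: "successively R Q" "distinct Q" "set Q = set d" "length Q = length d"
    "hd Q = p" "last Q = q" "cycle_edges d - {{p, q}} \<subseteq> path_edges Q"
    using cycle_open_at_edge[OF d \<open>symp R\<close> qp(1)] unfolding qp(2) .
  have ne: "P \<noteq> []" "Q \<noteq> []" using P(4) Q(4) c d by (auto simp: is_cycle_def)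
  have "is_cycle R (P @ Q)"
    using P Q ne disj c \<open>R x p\<close> \<open>R y q\<close> \<open>symp R\<close>
    by (auto simp: is_cycle_def successively_cycle_append dest: sympD)
  moreover have "path_edges P \<union> path_edges Q \<subseteq> cycle_edges (P @ Q)"
    using ne by (auto simp: cycle_edges_append)
  ultimately show ?thesis using that P Q by auto
qed

lemma hd_neq_last: "distinct xs \<Longrightarrow> 2 \<le> length xs \<Longrightarrow> hd xs \<noteq> last xs"
  by (cases xs) (auto simp: last_in_set)

lemma cycle_two_neighbours:
  assumes c: "is_cycle R c" and z: "z \<in> set c"
  obtains p q where "p \<noteq> q" "{z, p} \<in> cycle_edges c" "{z, q} \<in> cycle_edges c"
proof -
  obtain us vs where c_split: "c = us @ z # vs" using split_list[OF z] by blast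
  define ws where "ws = vs @ us"
  have ws: "cycle_edges (z # ws) = cycle_edges c" "distinct ws" "2 \<le> length ws"
    using c c_split cycle_edges_append_swap[of "z # vs" us] by (auto simp: ws_def is_cycle_def)
  then have "ws \<noteq> []" by auto
  then have "cycle_edges (z # ws) = insert {last ws, z} (insert {z, hd ws} (path_edges ws))"
    by (simp add: cycle_edges_conv_path_edges path_edges_Cons)
  then have "{z, hd ws} \<in> cycle_edges c" "{z, last ws} \<in> cycle_edges c"
    using ws(1) by (auto simp: insert_commute)
  then show ?thesis using that hd_neq_last[OF ws(2,3)] by blast
qed

section \<open>\<open>(\<alpha>, \<beta>)\<close>-moves\<close>

lemma ab_move_iff:
  assumes ab: "0 < b" "b < a"
  shows "ab_move a b d v \<longleftrightarrow> length v = d \<and>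
    (\<exists>i<d. \<exists>j<d. i \<noteq> j \<and> \<bar>v ! i\<bar> = a \<and> \<bar>v ! j\<bar> = b \<and> (\<forall>k<d. k \<noteq> i \<longrightarrow> k \<noteq> j \<longrightarrow> v ! k = 0))"
    (is "_ \<longleftrightarrow> _ \<and> ?axes")
proof
  assume m: "ab_move a b d v"
  then have zeros: "card {k. k < d \<and> v ! k = 0} = d - 2"
    and "card {k. k < d \<and> (v ! k = a \<or> v ! k = - a)} = 1"
    and "card {k. k < d \<and> (v ! k = b \<or> v ! k = - b)} = 1"
    unfolding ab_move_def by auto
  then obtain i j where i: "{k. k < d \<and> (v ! k = a \<or> v ! k = - a)} = {i}"
    and j: "{k. k < d \<and> (v ! k = b \<or> v ! k = - b)} = {j}"
    by (meson card_1_singletonE)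
  have "i < d" "v ! i = a \<or> v ! i = - a" "j < d" "v ! j = b \<or> v ! j = - b"
    using i j by blast+
  then have ij: "i < d" "j < d" "i \<noteq> j" "\<bar>v ! i\<bar> = a" "\<bar>v ! j\<bar> = b"
    using ab by auto
  have "{k. k < d \<and> v ! k = 0} \<subseteq> {..<d} - {i, j}" using ij ab by auto
  moreover have "card ({..<d} - {i, j}) = d - 2" using ij by (simp add: card_Diff_subset)
  ultimately have "{k. k < d \<and> v ! k = 0} = {..<d} - {i, j}"
    using zeros by (intro card_subset_eq) simp_all
  then have "\<forall>k<d. k \<noteq> i \<longrightarrow> k \<noteq> j \<longrightarrow> v ! k = 0" by blast
  then show "length v = d \<and> ?axes" using m ij unfolding ab_move_def by blast
next
  assume "length v = d \<and> ?axes"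
  then obtain i j where ij: "length v = d" "i < d" "j < d" "i \<noteq> j" "\<bar>v ! i\<bar> = a" "\<bar>v ! j\<bar> = b"
    and rest: "\<forall>k<d. k \<noteq> i \<longrightarrow> k \<noteq> j \<longrightarrow> v ! k = 0" by blast
  have "{k. k < d \<and> v ! k = 0} = {..<d} - {i, j}"
    "{k. k < d \<and> (v ! k = a \<or> v ! k = - a)} = {i}"
    "{k. k < d \<and> (v ! k = b \<or> v ! k = - b)} = {j}"
    using ij rest ab by force+
  with ij show "ab_move a b d v" by (simp add: ab_move_def card_Diff_subset)
qed

lemma ab_adj_iff:
  assumes "0 < b" "b < a" "length x = d" "length y = d"
  shows "ab_adj a b d x y \<longleftrightarrow> (\<exists>i<d. \<exists>j<d. i \<noteq> j \<and> \<bar>y ! i - x ! i\<bar> = a \<and> \<bar>y ! j - x ! j\<bar> = b \<and>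
    (\<forall>k<d. k \<noteq> i \<longrightarrow> k \<noteq> j \<longrightarrow> y ! k = x ! k))"
  using assms by (simp add: ab_adj_def ab_move_iff cong: conj_cong)

lemma ab_adj_sym: "ab_adj a b d x y \<Longrightarrow> ab_adj a b d y x"
proof -
  let ?v = "map2 (-) y x" and ?w = "map2 (-) x y"
  assume "ab_adj a b d x y"
  then have m: "ab_move a b d ?v" by (simp add: ab_adj_def)
  then have "length ?w = d" by (simp add: ab_move_def min.commute)
  moreover have "?w ! k = - (?v ! k)" if "k < d" for k
  proof -
    have "k < length x" "k < length y" using that \<open>length ?w = d\<close> by auto
    then show ?thesis by simp
  qed
  ultimately have "{k. k < d \<and> ?w ! k = 0} = {k. k < d \<and> ?v ! k = 0}"
    "{k. k < d \<and> (?w ! k = a \<or> ?w ! k = - a)} = {k. k < d \<and> (?v ! k = a \<or> ?v ! k = - a)}"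
    "{k. k < d \<and> (?w ! k = b \<or> ?w ! k = - b)} = {k. k < d \<and> (?v ! k = b \<or> ?v ! k = - b)}"
    by auto
  with m \<open>length ?w = d\<close> show "ab_adj a b d y x" by (simp add: ab_adj_def ab_move_def min.commute)
qed

lemma symp_ab_adj: "symp (ab_adj a b d)"
  by (rule sympI) (rule ab_adj_sym)

definition axis_shift :: "int \<Rightarrow> nat \<Rightarrow> int list \<Rightarrow> int list \<Rightarrow> bool" where
  "axis_shift s d u v \<longleftrightarrow> length u = d \<and> length v = d \<and>
     (\<exists>i<d. \<bar>v ! i - u ! i\<bar> = s \<and> (\<forall>k<d. k \<noteq> i \<longrightarrow> v ! k = u ! k))"

lemma axis_shift_snoc:
  assumes "axis_shift s d u v"
  shows "axis_shift s (Suc d) (u @ [j]) (v @ [j])"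
proof -
  obtain i where "length u = d" "length v = d" "i < d" "\<bar>v ! i - u ! i\<bar> = s"
    "\<forall>k<d. k \<noteq> i \<longrightarrow> v ! k = u ! k"
    using assms by (auto simp: axis_shift_def)
  then show ?thesis
    unfolding axis_shift_def by (intro conjI exI[of _ i]) (auto simp: nth_append less_Suc_eq)
qed

lemma ab_adj_snoc:
  assumes ab: "0 < b" "b < a" and len: "length x = d" "length y = d" and "ab_adj a b d x y"
  shows "ab_adj a b (Suc d) (x @ [j]) (y @ [j])"
proof -
  obtain i k where ik: "i < d" "k < d" "i \<noteq> k" "\<bar>y ! i - x ! i\<bar> = a" "\<bar>y ! k - x ! k\<bar> = b"
    and rest: "\<forall>l<d. l \<noteq> i \<longrightarrow> l \<noteq> k \<longrightarrow> y ! l = x ! l"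
    using assms ab_adj_iff[OF ab len] by blast
  have "\<forall>l<Suc d. l \<noteq> i \<longrightarrow> l \<noteq> k \<longrightarrow> (y @ [j]) ! l = (x @ [j]) ! l"
    using rest len by (auto simp: nth_append less_Suc_eq)
  moreover have "\<bar>(y @ [j]) ! i - (x @ [j]) ! i\<bar> = a" "\<bar>(y @ [j]) ! k - (x @ [j]) ! k\<bar> = b"
    using ik len by (simp_all add: nth_append)
  moreover have "length (x @ [j]) = Suc d" "length (y @ [j]) = Suc d" "i < Suc d" "k < Suc d"
    using ik len by simp_all
  ultimately show ?thesis using ab_adj_iff[OF ab] \<open>i \<noteq> k\<close> by blast
qed

lemma ab_adj_snoc_shift:
  assumes ab: "0 < b" "b < a" and "axis_shift s d u v" and st: "{s, t} = {a, b}"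
  shows "ab_adj a b (Suc d) (u @ [j]) (v @ [j + t])"
proof -
  obtain i where len: "length u = d" "length v = d"
    and i: "i < d" "\<bar>v ! i - u ! i\<bar> = s" "\<forall>k<d. k \<noteq> i \<longrightarrow> v ! k = u ! k"
    using assms(3) unfolding axis_shift_def by blast
  have rest: "\<forall>k<Suc d. k \<noteq> i \<longrightarrow> k \<noteq> d \<longrightarrow> (v @ [j + t]) ! k = (u @ [j]) ! k"
    using i len by (auto simp: nth_append less_Suc_eq)
  have coords: "\<bar>(v @ [j + t]) ! i - (u @ [j]) ! i\<bar> = s" "\<bar>(v @ [j + t]) ! d - (u @ [j]) ! d\<bar> = t"
    using i len ab st by (auto simp: nth_append doubleton_eq_iff)
  have lens: "length (u @ [j]) = Suc d" "length (v @ [j + t]) = Suc d" "i < Suc d" "d < Suc d" "i \<noteq> d"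
    using i len by simp_all
  from st ab consider "s = a" "t = b" | "s = b" "t = a" by (auto simp: doubleton_eq_iff)
  then show ?thesis using ab_adj_iff[OF ab lens(1,2)] coords rest lens(3-5) by cases blast+
qed

lemma board_snoc: "board (ns @ [m]) = {u @ [j] | u j. u \<in> board ns \<and> 1 \<le> j \<and> j \<le> m}"
proof (intro set_eqI iffI)
  fix x assume x: "x \<in> board (ns @ [m])"
  then have "x \<noteq> []" by (auto simp: board_def)
  then obtain u j where xs: "x = u @ [j]" by (metis rev_exhaust)
  have len: "length u = length ns" using x xs by (simp add: board_def)
  have bounds: "1 \<le> x ! i \<and> x ! i \<le> (ns @ [m]) ! i" if "i \<le> length ns" for i
    using x that by (simp add: board_def)
  have "1 \<le> u ! i \<and> u ! i \<le> ns ! i" if "i < length ns" for i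
    using bounds[of i] that len by (simp add: xs nth_append)
  then have "u \<in> board ns" using len by (simp add: board_def)
  moreover have "1 \<le> j \<and> j \<le> m"
    using bounds[of "length ns"] len by (simp add: xs nth_append)
  ultimately show "x \<in> {u @ [j] | u j. u \<in> board ns \<and> 1 \<le> j \<and> j \<le> m}" using xs by blast
qed (auto simp: board_def nth_append less_Suc_eq)

lemma is_cycle_map_snoc:
  assumes ab: "0 < b" "b < a" and C: "is_cycle (ab_adj a b d) C" and len: "\<forall>x\<in>set C. length x = d"
  shows "is_cycle (ab_adj a b (Suc d)) (map (\<lambda>u. u @ [j]) C)"
proof -
  have "C \<noteq> []" using C by (auto simp: is_cycle_def)
  then have snoc_hd: "map (\<lambda>u. u @ [j]) C @ [hd (map (\<lambda>u. u @ [j]) C)] = map (\<lambda>u. u @ [j]) (C @ [hd C])"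
    by (simp add: hd_map)
  have "successively (\<lambda>x y. ab_adj a b (Suc d) (x @ [j]) (y @ [j])) (C @ [hd C])"
  proof (rule successively_mono)
    show "successively (ab_adj a b d) (C @ [hd C])" using C by (simp add: is_cycle_def)
    fix x y assume "x \<in> set (C @ [hd C])" "y \<in> set (C @ [hd C])" "ab_adj a b d x y"
    then show "ab_adj a b (Suc d) (x @ [j]) (y @ [j])"
      using len \<open>C \<noteq> []\<close> ab_adj_snoc[OF ab] by auto
  qed
  then have "successively (ab_adj a b (Suc d)) (map (\<lambda>u. u @ [j]) C @ [hd (map (\<lambda>u. u @ [j]) C)])"
    by (simp only: snoc_hd successively_map)
  then show ?thesis
    using C by (simp add: is_cycle_def distinct_map inj_on_def)
qed

section \<open>Adding a dimension\<close>

text \<open>The order in which the first \<open>a + b - 1\<close> layers are stacked.\<close>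

definition layer_order :: "int \<Rightarrow> int \<Rightarrow> nat \<Rightarrow> int" where
  "layer_order a b k = int (Suc k) * a mod (a + b)"

lemma layer_order_0: "0 \<le> a \<Longrightarrow> 0 < b \<Longrightarrow> layer_order a b 0 = a"
  by (simp add: layer_order_def)

lemma layer_order_Suc:
  assumes "0 < a" "0 < b"
  shows "layer_order a b (Suc k) =
    (if layer_order a b k < b then layer_order a b k + a else layer_order a b k - b)"
proof -
  let ?x = "layer_order a b k"
  have x: "0 \<le> ?x" "?x < a + b" using assms by (simp_all add: layer_order_def)
  have "layer_order a b (Suc k) = (int (Suc k) * a + a) mod (a + b)"
    unfolding layer_order_def by (simp add: algebra_simps)
  also have "\<dots> = (?x + a) mod (a + b)"
    unfolding layer_order_def by (simp add: mod_add_left_eq)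
  also have "\<dots> = (if ?x < b then ?x + a else ?x - b)"
  proof (cases "?x < b")
    case False
    then have "(?x + a) mod (a + b) = (?x + a - (a + b)) mod (a + b)"
      using assms by (simp add: mod_pos_geq)
    also have "\<dots> = ?x - b" using x False assms by (simp add: mod_pos_pos_trivial)
    finally show ?thesis using False by simp
  qed (use x assms in \<open>simp add: mod_pos_pos_trivial\<close>)
  finally show ?thesis .
qed

lemma layer_order_inj_on:
  assumes "0 < a" "0 < b" "coprime a b"
  shows "inj_on (layer_order a b) {..<nat (a + b - 1)}"
proof (rule inj_onI)
  fix k k' assume k: "k \<in> {..<nat (a + b - 1)}" "k' \<in> {..<nat (a + b - 1)}"
    and eq: "layer_order a b k = layer_order a b k'"
  have "coprime (a + b) a" using assms(3) by (simp add: coprime_iff_gcd_eq_1 gcd.commute)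
  moreover have "(a + b) dvd (int k - int k') * a"
    using eq unfolding layer_order_def by (simp add: mod_eq_dvd_iff algebra_simps)
  ultimately have dvd: "(a + b) dvd (int k - int k')" by (simp add: coprime_dvd_mult_left_iff)
  show "k = k'"
  proof (rule ccontr)
    assume "k \<noteq> k'"
    then have "\<bar>a + b\<bar> \<le> \<bar>int k - int k'\<bar>" using dvd_imp_le_int dvd by simp
    moreover have "\<bar>int k - int k'\<bar> < a + b" using k by auto
    ultimately show False by simp
  qed
qed

lemma layer_order_image:
  assumes "0 < a" "0 < b" "coprime a b"
  shows "layer_order a b ` {..<nat (a + b - 1)} = {1..a + b - 1}"
proof (rule card_subset_eq)
  have "layer_order a b k \<noteq> 0" if "k < nat (a + b - 1)" for k
  proof
    assume "layer_order a b k = 0"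
    then have "(a + b) dvd int (Suc k) * a" by (simp add: layer_order_def dvd_eq_mod_eq_0)
    moreover have "coprime (a + b) a" using assms(3) by (simp add: coprime_iff_gcd_eq_1 gcd.commute)
    ultimately have "(a + b) dvd int (Suc k)" by (simp add: coprime_dvd_mult_left_iff)
    then show False using that zdvd_imp_le[of "a + b" "int (Suc k)"] by simp
  qed
  moreover have "0 \<le> layer_order a b k" "layer_order a b k < a + b" for k
    using assms by (simp_all add: layer_order_def)
  ultimately show "layer_order a b ` {..<nat (a + b - 1)} \<subseteq> {1..a + b - 1}"
    by (smt (verit) atLeastAtMost_iff image_subset_iff lessThan_iff)
  show "card (layer_order a b ` {..<nat (a + b - 1)}) = card {1..a + b - 1}"
    using layer_order_inj_on[OF assms] by (simp add: card_image)
qed simp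

lemma image_snoc_eq_iff:
  assumes "A \<noteq> {}"
  shows "(\<lambda>u. u @ [j]) ` A = (\<lambda>u. u @ [k]) ` B \<longleftrightarrow> j = k \<and> A = B"
proof
  assume eq: "(\<lambda>u. u @ [j]) ` A = (\<lambda>u. u @ [k]) ` B"
  obtain u where "u \<in> A" using assms by blast
  then have "u @ [j] \<in> (\<lambda>u. u @ [k]) ` B" using eq by blast
  then have "j = k" by auto
  moreover have "inj (\<lambda>u. u @ [j])" by (simp add: inj_def)
  ultimately show "j = k \<and> A = B" using eq by (simp add: inj_image_eq_iff)
qed simp

lemma doubleton_snoc_eq_iff: "{x @ [j], y @ [j]} = {u @ [k], v @ [k]} \<longleftrightarrow> j = k \<and> {x, y} = {u, v}"
  using image_snoc_eq_iff[of "{x, y}" j k "{u, v}"] by simp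

lemma inj_image_snoc: "inj ((`) (\<lambda>u. u @ [j]))"
  by (rule injI) (simp add: inj_image_eq_iff inj_def)

lemma distinct_map_image_snoc:
  assumes "distinct Es" "{} \<notin> set Es" "j \<noteq> k"
  shows "distinct (map ((`) (\<lambda>u. u @ [j])) Es @ map ((`) (\<lambda>u. u @ [k])) Es)"
proof -
  have "inj_on ((`) (\<lambda>u. u @ [i])) (set Es)" for i
    using inj_image_snoc by (rule inj_on_subset) simp
  moreover have "(\<lambda>u. u @ [j]) ` A \<noteq> (\<lambda>u. u @ [k]) ` B" if "A \<in> set Es" for A B
    using that assms(2,3) image_snoc_eq_iff[of A j k B] by auto
  ultimately show ?thesis using assms(1) by (auto simp: distinct_map)
qed

definition shifted_edge_pair ::
  "int list list \<Rightarrow> int \<Rightarrow> nat \<Rightarrow> int list \<Rightarrow> int list \<Rightarrow> int list \<Rightarrow> int list \<Rightarrow> bool" where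
  "shifted_edge_pair C s d x y x' y' \<longleftrightarrow> {x, y} \<in> cycle_edges C \<and> {x', y'} \<in> cycle_edges C \<and>
     axis_shift s d x x' \<and> axis_shift s d y y'"

definition has_good_tour :: "int \<Rightarrow> int \<Rightarrow> int list \<Rightarrow> bool" where
  "has_good_tour a b ns \<longleftrightarrow> (\<exists>C x1 y1 x1' y1' u1 v1 u1' v1' x2 y2 x2' y2' u2 v2 u2' v2'.
     ab_tour a b ns C \<and>
     shifted_edge_pair C b (length ns) x1 y1 x1' y1' \<and> shifted_edge_pair C a (length ns) u1 v1 u1' v1' \<and>
     shifted_edge_pair C b (length ns) x2 y2 x2' y2' \<and> shifted_edge_pair C a (length ns) u2 v2 u2' v2' \<and>
     distinct ([{x1, y1}, {x1', y1'}, {u1, v1}, {u1', v1'}] @ [{x2, y2}, {x2', y2'}, {u2, v2}, {u2', v2'}]))"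

locale tour_extension =
  fixes a b :: int and ns :: "int list" and C :: "int list list"
    and x1 y1 x1' y1' u1 v1 u1' v1' x2 y2 x2' y2' u2 v2 u2' v2' :: "int list"
  assumes ab: "0 < b" "b < a" and coprime: "coprime a b"
    and tour: "ab_tour a b ns C"
    and pair_b1: "shifted_edge_pair C b (length ns) x1 y1 x1' y1'"
    and pair_a1: "shifted_edge_pair C a (length ns) u1 v1 u1' v1'"
    and pair_b2: "shifted_edge_pair C b (length ns) x2 y2 x2' y2'"
    and pair_a2: "shifted_edge_pair C a (length ns) u2 v2 u2' v2'"
    and distinct_edges:
      "distinct ([{x1, y1}, {x1', y1'}, {u1, v1}, {u1', v1'}] @ [{x2, y2}, {x2', y2'}, {u2, v2}, {u2', v2'}])"
begin

abbreviation "d \<equiv> length ns"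
abbreviation "R \<equiv> ab_adj a b (Suc d)"
abbreviation lift :: "int \<Rightarrow> int list set \<Rightarrow> int list set" where
  "lift j \<equiv> (`) (\<lambda>u. u @ [j])"

definition layers :: "int set \<Rightarrow> int list set" where
  "layers S = {u @ [j] | u j. u \<in> board ns \<and> j \<in> S}"

definition layer_copy :: "int \<Rightarrow> int list list" where
  "layer_copy j = map (\<lambda>u. u @ [j]) C"

definition used_edges :: "int list set set" where
  "used_edges = {{x1, y1}, {x1', y1'}, {u1, v1}, {u1', v1'}}"

definition spare_edges :: "int list set set" where
  "spare_edges = {{x2, y2}, {x2', y2'}, {u2, v2}, {u2', v2'}}"

definition stacked :: "int set \<Rightarrow> int list list \<Rightarrow> bool" where
  "stacked S Z \<longleftrightarrow> is_cycle R Z \<and> set Z = layers S \<and> (\<forall>j\<in>S. lift j ` spare_edges \<subseteq> cycle_edges Z)"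

text \<open>
  Layer \<open>j + a\<close> is attached to layer \<open>j\<close> through the copy of the edge \<open>{x1, y1}\<close> there
  (the \<open>b\<close>-pair), layer \<open>j - b\<close> through the copy of \<open>{u1', v1'}\<close> (the \<open>a\<close>-pair).
\<close>

definition up_hook :: "int list list \<Rightarrow> int \<Rightarrow> bool" where
  "up_hook Z j \<longleftrightarrow> {x1 @ [j], y1 @ [j]} \<in> cycle_edges Z"

definition down_hook :: "int list list \<Rightarrow> int \<Rightarrow> bool" where
  "down_hook Z j \<longleftrightarrow> {u1' @ [j], v1' @ [j]} \<in> cycle_edges Z"

lemma cycle_C: "is_cycle (ab_adj a b d) C" and set_C: "set C = board ns"
  using tour by (simp_all add: ab_tour_iff_is_cycle)

lemma spare_edges_subset: "spare_edges \<subseteq> cycle_edges C"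
  using pair_b2 pair_a2 by (simp add: spare_edges_def shifted_edge_pair_def)

lemma spare_used_disjoint: "spare_edges \<inter> used_edges = {}"
  using distinct_edges unfolding distinct_append spare_edges_def used_edges_def
  by (simp only: list.set Int_commute)

lemma used_edges_distinct:
  "{x1, y1} \<noteq> {x1', y1'}" "{u1', v1'} \<noteq> {x1', y1'}"
  "{x1, y1} \<noteq> {u1, v1}" "{u1', v1'} \<noteq> {u1, v1}" "{x1, y1} \<noteq> {u1', v1'}"
proof -
  have used: "distinct [{x1, y1}, {x1', y1'}, {u1, v1}, {u1', v1'}]"
    using distinct_edges by (simp only: distinct_append)
  show "{x1, y1} \<noteq> {x1', y1'}" "{u1', v1'} \<noteq> {x1', y1'}"
    "{x1, y1} \<noteq> {u1, v1}" "{u1', v1'} \<noteq> {u1, v1}" "{x1, y1} \<noteq> {u1', v1'}"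
    using nth_eq_iff_index_eq[OF used, of 0 1] nth_eq_iff_index_eq[OF used, of 3 1]
      nth_eq_iff_index_eq[OF used, of 0 2] nth_eq_iff_index_eq[OF used, of 3 2]
      nth_eq_iff_index_eq[OF used, of 0 3]
    by simp_all
qed

lemma is_cycle_layer_copy: "is_cycle R (layer_copy j)"
  unfolding layer_copy_def using is_cycle_map_snoc[OF ab cycle_C] set_C by (simp add: board_def)

lemma set_layer_copy: "set (layer_copy j) = layers {j}"
  by (auto simp: layer_copy_def layers_def set_C)

lemma cycle_edges_layer_copy: "cycle_edges (layer_copy j) = lift j ` cycle_edges C"
  by (simp add: layer_copy_def cycle_edges_map)

lemma stacked_layer_copy: "stacked {j} (layer_copy j)"
  using spare_edges_subset
  by (auto simp: stacked_def is_cycle_layer_copy set_layer_copy cycle_edges_layer_copy)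

lemma spare_edges_preserved:
  assumes "lift k ` spare_edges \<subseteq> cycle_edges Z" "cycle_edges Z - {{p @ [j], q @ [j]}} \<subseteq> cycle_edges Z'"
    and "{p, q} \<in> used_edges"
  shows "lift k ` spare_edges \<subseteq> cycle_edges Z'"
proof -
  have "lift k s \<noteq> lift j {p, q}" if "s \<in> spare_edges" for s
    using that assms(3) spare_used_disjoint by (subst image_snoc_eq_iff) (auto simp: spare_edges_def)
  then show ?thesis using assms(1,2) by fastforce
qed

lemma extend_by_layer:
  assumes Z: "stacked S Z" and "j \<notin> S" and pq: "{p @ [j0], q @ [j0]} \<in> cycle_edges Z"
    and pq': "{p', q'} \<in> cycle_edges C" and "R (p @ [j0]) (p' @ [j])" "R (q @ [j0]) (q' @ [j])"
    and used: "{p, q} \<in> used_edges" "{p', q'} \<in> used_edges"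
  obtains Z' where "stacked (insert j S) Z'" "cycle_edges Z - {{p @ [j0], q @ [j0]}} \<subseteq> cycle_edges Z'"
    "lift j ` (cycle_edges C - {{p', q'}}) \<subseteq> cycle_edges Z'"
proof -
  have cycle_Z: "is_cycle R Z" using Z by (simp add: stacked_def)
  have disj: "set Z \<inter> set (layer_copy j) = {}"
    using Z \<open>j \<notin> S\<close> by (auto simp: stacked_def set_layer_copy layers_def)
  have pq'_copy: "{p' @ [j], q' @ [j]} \<in> cycle_edges (layer_copy j)"
    using imageI[OF pq', of "lift j"] by (simp add: cycle_edges_layer_copy)
  obtain Z' where Z': "is_cycle R Z'" "set Z' = set Z \<union> set (layer_copy j)"
    and old: "cycle_edges Z - {{p @ [j0], q @ [j0]}} \<subseteq> cycle_edges Z'"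
    and new: "cycle_edges (layer_copy j) - {{p' @ [j], q' @ [j]}} \<subseteq> cycle_edges Z'"
    using cycle_merge[OF cycle_Z is_cycle_layer_copy symp_ab_adj disj pq pq'_copy assms(5,6)] .
  have new': "lift j ` (cycle_edges C - {{p', q'}}) \<subseteq> cycle_edges Z'"
    using new by (simp add: cycle_edges_layer_copy image_set_diff[OF inj_image_snoc])
  have "spare_edges \<subseteq> cycle_edges C - {{p', q'}}"
    using spare_edges_subset spare_used_disjoint used by blast
  then have "lift j ` spare_edges \<subseteq> cycle_edges Z'" using new' by blast
  moreover have "lift k ` spare_edges \<subseteq> cycle_edges Z'" if "k \<in> S" for k
    using spare_edges_preserved[OF _ old used(1)] that Z by (simp add: stacked_def)
  moreover have "set Z' = layers (insert j S)"
    using Z Z' by (auto simp: stacked_def set_layer_copy layers_def)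
  ultimately have "stacked (insert j S) Z'" using Z'(1) unfolding stacked_def by blast
  then show ?thesis using old new' by (rule that)
qed

lemma up_step:
  assumes Z: "stacked S Z" and new: "j + a \<notin> S" and hook: "up_hook Z j"
  obtains Z' where "stacked (insert (j + a) S) Z'" "\<And>k. up_hook Z k \<Longrightarrow> k \<noteq> j \<Longrightarrow> up_hook Z' k"
    "up_hook Z' (j + a)" "down_hook Z' (j + a)"
proof -
  have edges: "{x1, y1} \<in> cycle_edges C" "{x1', y1'} \<in> cycle_edges C"
    and shifts: "axis_shift b d x1 x1'" "axis_shift b d y1 y1'"
    using pair_b1 by (simp_all add: shifted_edge_pair_def)
  have "{b, a} = {a, b}" by (simp add: insert_commute)
  then have cross: "R (x1 @ [j]) (x1' @ [j + a])" "R (y1 @ [j]) (y1' @ [j + a])"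
    using shifts ab_adj_snoc_shift[OF ab] by blast+
  have hook_edge: "{x1 @ [j], y1 @ [j]} \<in> cycle_edges Z" using hook by (simp add: up_hook_def)
  have used: "{x1, y1} \<in> used_edges" "{x1', y1'} \<in> used_edges" by (simp_all add: used_edges_def)
  obtain Z' where Z': "stacked (insert (j + a) S) Z'"
    and old: "cycle_edges Z - {{x1 @ [j], y1 @ [j]}} \<subseteq> cycle_edges Z'"
    and layer: "lift (j + a) ` (cycle_edges C - {{x1', y1'}}) \<subseteq> cycle_edges Z'"
    by (rule extend_by_layer[OF Z new hook_edge edges(2) cross used])
  have "{x1, y1} \<in> cycle_edges C - {{x1', y1'}}" "{u1', v1'} \<in> cycle_edges C - {{x1', y1'}}"
    using edges pair_a1 used_edges_distinct by (auto simp: shifted_edge_pair_def)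
  then have "lift (j + a) {x1, y1} \<in> cycle_edges Z'" "lift (j + a) {u1', v1'} \<in> cycle_edges Z'"
    using layer by blast+
  then have "up_hook Z' (j + a)" "down_hook Z' (j + a)" by (simp_all add: up_hook_def down_hook_def)
  moreover have "up_hook Z' k" if "up_hook Z k" "k \<noteq> j" for k
    using that old by (auto simp: up_hook_def doubleton_snoc_eq_iff)
  ultimately show ?thesis using that Z' by blast
qed

lemma down_step:
  assumes Z: "stacked S Z" and new: "j - b \<notin> S" and hook: "down_hook Z j"
  obtains Z' where "stacked (insert (j - b) S) Z'" "\<And>k. up_hook Z k \<Longrightarrow> up_hook Z' k"
    "up_hook Z' (j - b)" "down_hook Z' (j - b)"
proof -
  have edges: "{u1, v1} \<in> cycle_edges C" "{u1', v1'} \<in> cycle_edges C"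
    and shifts: "axis_shift a d u1 u1'" "axis_shift a d v1 v1'"
    using pair_a1 by (simp_all add: shifted_edge_pair_def)
  have "R (u1 @ [j - b]) (u1' @ [j])" "R (v1 @ [j - b]) (v1' @ [j])"
    using shifts ab_adj_snoc_shift[OF ab, where j = "j - b" and t = b] by simp_all
  then have cross: "R (u1' @ [j]) (u1 @ [j - b])" "R (v1' @ [j]) (v1 @ [j - b])"
    by (simp_all add: ab_adj_sym)
  have hook_edge: "{u1' @ [j], v1' @ [j]} \<in> cycle_edges Z" using hook by (simp add: down_hook_def)
  have used: "{u1', v1'} \<in> used_edges" "{u1, v1} \<in> used_edges" by (simp_all add: used_edges_def)
  obtain Z' where Z': "stacked (insert (j - b) S) Z'"
    and old: "cycle_edges Z - {{u1' @ [j], v1' @ [j]}} \<subseteq> cycle_edges Z'"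
    and layer: "lift (j - b) ` (cycle_edges C - {{u1, v1}}) \<subseteq> cycle_edges Z'"
    by (rule extend_by_layer[OF Z new hook_edge edges(1) cross used])
  have "{x1, y1} \<in> cycle_edges C - {{u1, v1}}" "{u1', v1'} \<in> cycle_edges C - {{u1, v1}}"
    using edges pair_b1 used_edges_distinct by (auto simp: shifted_edge_pair_def)
  then have "lift (j - b) {x1, y1} \<in> cycle_edges Z'" "lift (j - b) {u1', v1'} \<in> cycle_edges Z'"
    using layer by blast+
  then have "up_hook Z' (j - b)" "down_hook Z' (j - b)" by (simp_all add: up_hook_def down_hook_def)
  moreover have "up_hook Z' k" if "up_hook Z k" for k
  proof -
    have "{x1 @ [k], y1 @ [k]} \<noteq> {u1' @ [j], v1' @ [j]}"
      using used_edges_distinct(5) by (simp add: doubleton_snoc_eq_iff)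
    with that have "{x1 @ [k], y1 @ [k]} \<in> cycle_edges Z - {{u1' @ [j], v1' @ [j]}}"
      unfolding up_hook_def by (simp only: Diff_iff singleton_iff simp_thms)
    with old show ?thesis unfolding up_hook_def by (rule subsetD)
  qed
  ultimately show ?thesis using that Z' by blast
qed

abbreviation layer :: "nat \<Rightarrow> int" where
  "layer \<equiv> layer_order a b"

text \<open>
  The layers \<open>b, \<dots>, a + b - 1\<close> must keep their up-hooks for the second stage, where layer
  \<open>M + 1\<close> is attached to layer \<open>M + 1 - a\<close>.
\<close>

definition initial_stack :: "nat \<Rightarrow> int list list \<Rightarrow> bool" where
  "initial_stack i Z \<longleftrightarrow> stacked (layer ` {..i}) Z \<and> up_hook Z (layer i) \<and> down_hook Z (layer i) \<and>
     (\<forall>k\<le>i. b \<le> layer k \<longrightarrow> up_hook Z (layer k))"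

lemma initial_stack_exists: "i < nat (a + b - 1) \<Longrightarrow> \<exists>Z. initial_stack i Z"
proof (induction i)
  case 0
  have "{x1, y1} \<in> cycle_edges C" "{u1', v1'} \<in> cycle_edges C"
    using pair_b1 pair_a1 by (simp_all add: shifted_edge_pair_def)
  then have "lift a {x1, y1} \<in> cycle_edges (layer_copy a)" "lift a {u1', v1'} \<in> cycle_edges (layer_copy a)"
    unfolding cycle_edges_layer_copy by blast+
  then have "up_hook (layer_copy a) a" "down_hook (layer_copy a) a"
    by (simp_all add: up_hook_def down_hook_def)
  then have "initial_stack 0 (layer_copy a)"
    using stacked_layer_copy ab by (simp add: initial_stack_def layer_order_0)
  then show ?case by blast
next
  case (Suc i)
  then obtain Z where Z: "stacked (layer ` {..i}) Z" "up_hook Z (layer i)" "down_hook Z (layer i)"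
    and hooks: "\<forall>k\<le>i. b \<le> layer k \<longrightarrow> up_hook Z (layer k)"
    by (auto simp: initial_stack_def)
  have "inj_on layer {..<nat (a + b - 1)}" using layer_order_inj_on ab coprime by simp
  then have fresh: "layer (Suc i) \<notin> layer ` {..i}"
    using Suc.prems by (force simp: inj_on_def)
  have range: "insert (layer (Suc i)) (layer ` {..i}) = layer ` {..Suc i}"
    by (simp add: atMost_Suc)
  show ?case
  proof (cases "layer i < b")
    case True
    then have next_layer: "layer (Suc i) = layer i + a" using ab by (simp add: layer_order_Suc)
    obtain Z' where "stacked (insert (layer i + a) (layer ` {..i})) Z'"
      "\<And>k. up_hook Z k \<Longrightarrow> k \<noteq> layer i \<Longrightarrow> up_hook Z' k"
      "up_hook Z' (layer i + a)" "down_hook Z' (layer i + a)"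
      using up_step[OF Z(1) _ Z(2)] fresh next_layer by auto
    moreover have "layer k \<noteq> layer i" if "b \<le> layer k" for k using that True by simp
    ultimately have "initial_stack (Suc i) Z'"
      using hooks range next_layer by (auto simp: initial_stack_def le_Suc_eq)
    then show ?thesis by blast
  next
    case False
    then have next_layer: "layer (Suc i) = layer i - b" using ab by (simp add: layer_order_Suc)
    obtain Z' where "stacked (insert (layer i - b) (layer ` {..i})) Z'"
      "\<And>k. up_hook Z k \<Longrightarrow> up_hook Z' k"
      "up_hook Z' (layer i - b)" "down_hook Z' (layer i - b)"
      using down_step[OF Z(1) _ Z(3)] fresh next_layer by auto
    then have "initial_stack (Suc i) Z'"
      using hooks range next_layer by (auto simp: initial_stack_def le_Suc_eq)
    then show ?thesis by blast
  qed
qed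

definition full_stack :: "int \<Rightarrow> int list list \<Rightarrow> bool" where
  "full_stack M Z \<longleftrightarrow> stacked {1..M} Z \<and> (\<forall>j. M - a < j \<and> j \<le> M \<longrightarrow> up_hook Z j)"

lemma full_stack_initial: "\<exists>Z. full_stack (a + b - 1) Z"
proof -
  let ?n = "nat (a + b - 1)"
  obtain Z where Z: "initial_stack (?n - 1) Z" using initial_stack_exists ab by force
  have "{..?n - 1} = {..<?n}" using ab by auto
  then have layers: "layer ` {..?n - 1} = {1..a + b - 1}"
    using layer_order_image ab coprime by simp
  have "up_hook Z j" if "b \<le> j" "j \<le> a + b - 1" for j
  proof -
    have "j \<in> layer ` {..?n - 1}" using that ab unfolding layers by simp
    then obtain k where "k \<le> ?n - 1" "j = layer k" by blast
    then show ?thesis using Z that by (simp add: initial_stack_def)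
  qed
  then have "full_stack (a + b - 1) Z"
    using Z layers by (auto simp: initial_stack_def full_stack_def)
  then show ?thesis by blast
qed

lemma full_stack_Suc:
  assumes "a + b - 1 \<le> M" and Z: "full_stack M Z"
  shows "\<exists>Z'. full_stack (M + 1) Z'"
proof -
  have stack: "stacked {1..M} Z" and hooks: "\<forall>j. M - a < j \<and> j \<le> M \<longrightarrow> up_hook Z j"
    using Z by (simp_all add: full_stack_def)
  have hook: "up_hook Z (M + 1 - a)" and fresh: "M + 1 - a + a \<notin> {1..M}" using hooks ab by simp_all
  obtain Z' where Z': "stacked (insert (M + 1 - a + a) {1..M}) Z'"
    and old: "\<And>k. up_hook Z k \<Longrightarrow> k \<noteq> M + 1 - a \<Longrightarrow> up_hook Z' k"
    and new: "up_hook Z' (M + 1 - a + a)" "down_hook Z' (M + 1 - a + a)"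
    using up_step[OF stack fresh hook] by blast
  have "insert (M + 1 - a + a) {1..M} = {1..M + 1}" using assms ab by auto
  moreover have "up_hook Z' j" if "M + 1 - a < j" "j \<le> M + 1" for j
  proof (cases "j = M + 1")
    case False
    then show ?thesis using that hooks old by simp
  qed (use new(1) in simp)
  ultimately have "full_stack (M + 1) Z'" using Z' by (simp add: full_stack_def)
  then show ?thesis by blast
qed

lemma stacked_exists:
  assumes "a + b - 1 \<le> M"
  shows "\<exists>Z. stacked {1..M} Z"
proof -
  have "\<exists>Z. full_stack M Z"
    using assms by (induction M rule: int_ge_induct) (auto intro: full_stack_initial dest: full_stack_Suc)
  then show ?thesis by (auto simp: full_stack_def)
qed

lemma has_good_tour_if_stacked:
  assumes Z: "stacked {1..m} Z" and "2 \<le> m"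
  shows "has_good_tour a b (ns @ [m])"
proof -
  let ?S = "[{x2, y2}, {x2', y2'}, {u2, v2}, {u2', v2'}]"
  have tour': "ab_tour a b (ns @ [m]) Z"
    using Z by (auto simp: stacked_def ab_tour_iff_is_cycle board_snoc layers_def)
  have pairs: "shifted_edge_pair Z b (length (ns @ [m])) (x2 @ [j]) (y2 @ [j]) (x2' @ [j]) (y2' @ [j])"
    "shifted_edge_pair Z a (length (ns @ [m])) (u2 @ [j]) (v2 @ [j]) (u2' @ [j]) (v2' @ [j])"
    if "j \<in> {1..m}" for j
    using that Z pair_b2 pair_a2 axis_shift_snoc
    by (auto simp: stacked_def shifted_edge_pair_def spare_edges_def)
  have "distinct ?S" using distinct_edges by (simp only: distinct_append)
  then have "distinct (map (lift 1) ?S @ map (lift 2) ?S)"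
    by (rule distinct_map_image_snoc) simp_all
  then have "distinct ([{x2 @ [1], y2 @ [1]}, {x2' @ [1], y2' @ [1]}, {u2 @ [1], v2 @ [1]}, {u2' @ [1], v2' @ [1]}]
    @ [{x2 @ [2], y2 @ [2]}, {x2' @ [2], y2' @ [2]}, {u2 @ [2], v2 @ [2]}, {u2' @ [2], v2' @ [2]}])"
    by (simp only: list.map image_insert image_empty)
  moreover have "1 \<in> {1..m}" "2 \<in> {1..m}" using \<open>2 \<le> m\<close> by simp_all
  ultimately show ?thesis
    unfolding has_good_tour_def using tour' pairs by blast
qed

end

lemma has_good_tour_snoc:
  assumes ab: "0 < b" "b < a" and "coprime a b" and m: "a + b - 1 \<le> m" and "has_good_tour a b ns"
  shows "has_good_tour a b (ns @ [m])"
proof -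
  obtain C x1 y1 x1' y1' u1 v1 u1' v1' x2 y2 x2' y2' u2 v2 u2' v2' where
    "tour_extension a b ns C x1 y1 x1' y1' u1 v1 u1' v1' x2 y2 x2' y2' u2 v2 u2' v2'"
    using assms unfolding has_good_tour_def tour_extension_def by blast
  then interpret tour_extension a b ns C x1 y1 x1' y1' u1 v1 u1' v1' x2 y2 x2' y2' u2 v2 u2' v2' .
  obtain Z where "stacked {1..m} Z" using stacked_exists m by blast
  then show ?thesis using has_good_tour_if_stacked ab m by simp
qed

section \<open>Planar tours\<close>

lemma board_two: "board [n1, n2] = {[p, q] | p q. 1 \<le> p \<and> p \<le> n1 \<and> 1 \<le> q \<and> q \<le> n2}"
proof (intro set_eqI iffI)
  fix x assume x: "x \<in> board [n1, n2]"
  then have "length x = 2" by (simp add: board_def)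
  then obtain p q where "x = [p, q]" by (metis One_nat_def length_0_conv length_Suc_conv numeral_2_eq_2)
  with x show "x \<in> {[p, q] | p q. 1 \<le> p \<and> p \<le> n1 \<and> 1 \<le> q \<and> q \<le> n2}"
    by (simp add: board_def All_less_Suc numeral_2_eq_2)
qed (auto simp: board_def less_Suc_eq)

lemma ab_adj_two:
  assumes "0 < b" "b < a"
  shows "ab_adj a b 2 [p, q] [p', q'] \<longleftrightarrow>
    (\<bar>p' - p\<bar> = a \<and> \<bar>q' - q\<bar> = b) \<or> (\<bar>p' - p\<bar> = b \<and> \<bar>q' - q\<bar> = a)"
  using assms by (simp add: ab_adj_iff numeral_2_eq_2 Ex_less_Suc All_less_Suc) auto

lemma coprime_of_planar_tour:
  assumes ab: "0 < b" "b < a" and t: "ab_tour a b [n1, n2] c" and n: "2 \<le> n1" "1 \<le> n2"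
  shows "coprime a b"
proof -
  let ?g = "gcd a b"
  have c: "is_cycle (ab_adj a b 2) c" "set c = board [n1, n2]"
    using t by (simp_all add: ab_tour_iff_is_cycle numeral_2_eq_2)
  then have path: "successively (ab_adj a b 2) c" by (simp add: is_cycle_def successively_append_iff)
  have step: "x ! 0 mod ?g = y ! 0 mod ?g" if xy: "x \<in> set c" "y \<in> set c" and adj: "ab_adj a b 2 x y" for x y
  proof -
    obtain p q p' q' where "x = [p, q]" "y = [p', q']" using xy c(2) by (auto simp: board_two)
    then have "\<bar>p' - p\<bar> = a \<or> \<bar>p' - p\<bar> = b" using adj ab_adj_two[OF ab] by auto
    then have "?g dvd (p' - p)" by (metis dvd_abs_iff gcd_dvd1 gcd_dvd2)
    then show ?thesis
      using \<open>x = [p, q]\<close> \<open>y = [p', q']\<close> by (simp add: mod_eq_dvd_iff dvd_diff_commute)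
  qed
  have same: "x ! 0 mod ?g = hd c ! 0 mod ?g" if "x \<in> set c" for x
    using successively_imp_const[where f = "\<lambda>x. x ! 0 mod ?g", OF path step that] .
  have "[1, 1] \<in> set c" "[2, 1] \<in> set c" using c(2) n by (auto simp: board_two)
  then have "[1, 1] ! 0 mod ?g = [2, 1] ! 0 mod ?g" using same by metis
  then have "1 mod ?g = 2 mod ?g" by simp
  then have "?g dvd 1" by (simp add: mod_eq_dvd_iff)
  then show ?thesis by (simp add: coprime_iff_gcd_eq_1)
qed

locale planar_corner =
  fixes a b n1 n2 :: int and c :: "int list list" and cx sx cy sy :: int
  assumes ab: "0 < b" "b < a" and n: "2 * a + 1 \<le> n1" "2 * a + 1 \<le> n2"
    and tour: "ab_tour a b [n1, n2] c"
    and sx: "(sx = 1 \<and> cx = 1) \<or> (sx = -1 \<and> cx = n1)"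
    and sy: "(sy = 1 \<and> cy = 1) \<or> (sy = -1 \<and> cy = n2)"
begin

definition cell :: "int \<Rightarrow> int \<Rightarrow> int list" where
  "cell u v = [cx + sx * u, cy + sy * v]"

definition ab_offset :: "int \<Rightarrow> int \<Rightarrow> int \<Rightarrow> int \<Rightarrow> bool" where
  "ab_offset u0 v0 u v \<longleftrightarrow> (\<bar>u - u0\<bar> = a \<and> \<bar>v - v0\<bar> = b) \<or> (\<bar>u - u0\<bar> = b \<and> \<bar>v - v0\<bar> = a)"

lemma cycle_c: "is_cycle (ab_adj a b 2) c" and set_c: "set c = board [n1, n2]"
  using tour by (simp_all add: ab_tour_iff_is_cycle numeral_2_eq_2)

lemma cell_in_board_iff: "cell u v \<in> board [n1, n2] \<longleftrightarrow> 0 \<le> u \<and> u \<le> n1 - 1 \<and> 0 \<le> v \<and> v \<le> n2 - 1"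
  unfolding cell_def board_two using sx sy by auto

lemma cell_in_board: "0 \<le> u \<Longrightarrow> u \<le> 2 * a \<Longrightarrow> 0 \<le> v \<Longrightarrow> v \<le> 2 * a \<Longrightarrow> cell u v \<in> board [n1, n2]"
  using cell_in_board_iff n by simp

lemma board_cell:
  assumes "w \<in> board [n1, n2]"
  obtains u v where "w = cell u v"
proof -
  obtain p q where w: "w = [p, q]" using assms by (auto simp: board_two)
  have "p = cx + sx * (sx * (p - cx))" "q = cy + sy * (sy * (q - cy))" using sx sy by auto
  then show ?thesis using that unfolding cell_def w by blast
qed

lemma ab_adj_cell_iff: "ab_adj a b 2 (cell u v) (cell u' v') \<longleftrightarrow> ab_offset u v u' v'"
proof -
  have "\<bar>(cx + sx * u') - (cx + sx * u)\<bar> = \<bar>u' - u\<bar>" "\<bar>(cy + sy * v') - (cy + sy * v)\<bar> = \<bar>v' - v\<bar>"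
    using sx sy by (auto simp: abs_if algebra_simps)
  then show ?thesis unfolding cell_def ab_offset_def using ab_adj_two[OF ab] by simp
qed

lemma axis_shift_cell: "\<bar>u' - u\<bar> = s \<Longrightarrow> axis_shift s 2 (cell u v) (cell u' v)"
  using sx unfolding axis_shift_def cell_def
  by (intro conjI exI[of _ 0]) (auto simp: less_Suc_eq abs_if algebra_simps numeral_2_eq_2)

lemma cell_neighbours:
  assumes "cell u0 v0 \<in> board [n1, n2]"
  obtains u v u' v' where "(u, v) \<noteq> (u', v')"
    "{cell u0 v0, cell u v} \<in> cycle_edges c" "{cell u0 v0, cell u' v'} \<in> cycle_edges c"
    "0 \<le> u" "0 \<le> v" "0 \<le> u'" "0 \<le> v'" "ab_offset u0 v0 u v" "ab_offset u0 v0 u' v'"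
proof -
  obtain p q where pq: "p \<noteq> q" "{cell u0 v0, p} \<in> cycle_edges c" "{cell u0 v0, q} \<in> cycle_edges c"
    using cycle_two_neighbours[OF cycle_c] assms set_c by blast
  then have "p \<in> board [n1, n2]" "q \<in> board [n1, n2]"
    using cycle_edges_subset set_c by blast+
  then obtain u v u' v' where p: "p = cell u v" and q: "q = cell u' v'" by (metis board_cell)
  have "ab_offset u0 v0 u v" "ab_offset u0 v0 u' v'"
    using pq p q cycle_edges_adj[OF cycle_c symp_ab_adj] ab_adj_cell_iff by blast+
  moreover have "0 \<le> u" "0 \<le> v" "0 \<le> u'" "0 \<le> v'"
    using \<open>p \<in> board [n1, n2]\<close> \<open>q \<in> board [n1, n2]\<close> p q cell_in_board_iff by simp_all
  moreover have "(u, v) \<noteq> (u', v')" using pq(1) p q by auto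
  ultimately show ?thesis using that pq p q by blast
qed

lemma corner_edges: "{cell 0 0, cell a b} \<in> cycle_edges c" "{cell 0 0, cell b a} \<in> cycle_edges c"
proof -
  have "cell 0 0 \<in> board [n1, n2]" using cell_in_board ab by simp
  then obtain u v u' v' where nb: "(u, v) \<noteq> (u', v')"
    "{cell 0 0, cell u v} \<in> cycle_edges c" "{cell 0 0, cell u' v'} \<in> cycle_edges c"
    "0 \<le> u" "0 \<le> v" "0 \<le> u'" "0 \<le> v'" "ab_offset 0 0 u v" "ab_offset 0 0 u' v'"
    by (rule cell_neighbours)
  then have "(u = a \<and> v = b) \<or> (u = b \<and> v = a)" "(u' = a \<and> v' = b) \<or> (u' = b \<and> v' = a)"
    by (auto simp: ab_offset_def)
  with nb show "{cell 0 0, cell a b} \<in> cycle_edges c" "{cell 0 0, cell b a} \<in> cycle_edges c" by auto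
qed

lemma corner_b_pair:
  "\<exists>u1 v1 u2 v2. shifted_edge_pair c b 2 (cell 0 0) (cell u1 v1) (cell b 0) (cell u2 v2) \<and>
     1 \<le> v1 \<and> v1 \<le> a \<and> 1 \<le> v2 \<and> v2 \<le> a"
proof -
  have "cell b 0 \<in> board [n1, n2]" using cell_in_board ab by simp
  then obtain u v u' v' where "(u, v) \<noteq> (u', v')"
    and edge: "{cell b 0, cell u v} \<in> cycle_edges c" and "{cell b 0, cell u' v'} \<in> cycle_edges c"
    and nonneg: "0 \<le> u" "0 \<le> v" and "0 \<le> u'" "0 \<le> v'"
    and offset: "ab_offset b 0 u v" and "ab_offset b 0 u' v'"
    by (rule cell_neighbours)
  from nonneg offset have cases: "(u = a + b \<and> v = b) \<or> (\<bar>u - b\<bar> = b \<and> v = a)"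
    using ab by (auto simp: ab_offset_def)
  have shift: "axis_shift b 2 (cell 0 0) (cell b 0)" using axis_shift_cell ab by simp
  show ?thesis
  proof (cases "u = a + b \<and> v = b")
    case True
    then have "shifted_edge_pair c b 2 (cell 0 0) (cell a b) (cell b 0) (cell u v)"
      using corner_edges edge shift axis_shift_cell[of u a b] ab by (simp add: shifted_edge_pair_def)
    then show ?thesis using True ab by fastforce
  next
    case False
    with cases have "\<bar>u - b\<bar> = b" "v = a" by auto
    then have "shifted_edge_pair c b 2 (cell 0 0) (cell b a) (cell b 0) (cell u v)"
      using corner_edges edge shift axis_shift_cell[of u b b] by (simp add: shifted_edge_pair_def)
    then show ?thesis using \<open>v = a\<close> ab by fastforce
  qed
qed

lemma corner_a_pair:
  "\<exists>u1 v1 u2 v2. shifted_edge_pair c a 2 (cell 0 0) (cell u1 v1) (cell a 0) (cell u2 v2) \<and>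
     1 \<le> v1 \<and> v1 \<le> a \<and> 1 \<le> v2 \<and> v2 \<le> a"
proof -
  have "cell a 0 \<in> board [n1, n2]" using cell_in_board ab by simp
  then obtain u v u' v' where "(u, v) \<noteq> (u', v')"
    "{cell a 0, cell u v} \<in> cycle_edges c" "{cell a 0, cell u' v'} \<in> cycle_edges c"
    "0 \<le> u" "0 \<le> v" "0 \<le> u'" "0 \<le> v'" "ab_offset a 0 u v" "ab_offset a 0 u' v'"
    by (rule cell_neighbours)
  \<comment> \<open>\<open>(a - b, a)\<close> is the only neighbour that is not an \<open>a\<close>-translate of a neighbour of the corner\<close>
  then obtain U V where UV: "{cell a 0, cell U V} \<in> cycle_edges c" "0 \<le> U" "0 \<le> V"
    "ab_offset a 0 U V" "(U, V) \<noteq> (a - b, a)"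
    by metis
  then have cases: "(\<bar>U - a\<bar> = a \<and> V = b) \<or> (U = a + b \<and> V = a)"
    using ab by (auto simp: ab_offset_def)
  have shift: "axis_shift a 2 (cell 0 0) (cell a 0)" using axis_shift_cell ab by simp
  show ?thesis
  proof (cases "U = a + b \<and> V = a")
    case True
    then have "shifted_edge_pair c a 2 (cell 0 0) (cell b a) (cell a 0) (cell U V)"
      using corner_edges UV(1) shift axis_shift_cell[of U b a] ab by (simp add: shifted_edge_pair_def)
    then show ?thesis using True ab by fastforce
  next
    case False
    with cases have "\<bar>U - a\<bar> = a" "V = b" by auto
    then have "shifted_edge_pair c a 2 (cell 0 0) (cell a b) (cell a 0) (cell U V)"
      using corner_edges UV(1) shift axis_shift_cell[of U a a] by (simp add: shifted_edge_pair_def)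
    then show ?thesis using \<open>V = b\<close> ab by fastforce
  qed
qed

end

lemma distinct_doubletons:
  assumes "distinct es" "length fs = length es" "\<forall>e\<in>set es. P e" "\<forall>f\<in>set fs. \<not> P f"
  shows "distinct (map2 (\<lambda>e f. {e, f}) es fs)"
  using assms(2,1,3,4)
proof (induction fs es rule: list_induct2)
  case (Cons f fs e es)
  have "{e, f} \<notin> set (map2 (\<lambda>e f. {e, f}) es fs)"
  proof
    assume "{e, f} \<in> set (map2 (\<lambda>e f. {e, f}) es fs)"
    then obtain e' f' where "(e', f') \<in> set (zip es fs)" "{e, f} = {e', f'}" by auto
    moreover from this have "e' \<in> set es" "f' \<in> set fs" by (auto dest: set_zip_leftD set_zip_rightD)
    ultimately show False using Cons.prems by (auto simp: doubleton_eq_iff)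
  qed
  with Cons show ?case by simp
qed simp

lemma has_good_tour_planar:
  assumes ab: "0 < b" "b < a" and n: "2 * a + 1 \<le> n1" "2 * a + 1 \<le> n2"
    and tour: "ab_tour a b [n1, n2] c"
  shows "has_good_tour a b [n1, n2]"
proof -
  interpret A: planar_corner a b n1 n2 c 1 1 1 1 using assms by unfold_locales auto
  interpret B: planar_corner a b n1 n2 c n1 "-1" 1 1 using assms by unfold_locales auto
  interpret C: planar_corner a b n1 n2 c n1 "-1" n2 "-1" using assms by unfold_locales auto
  interpret D: planar_corner a b n1 n2 c 1 1 n2 "-1" using assms by unfold_locales auto
  obtain au1 av1 au2 av2 where
    pair_A: "shifted_edge_pair c b 2 (A.cell 0 0) (A.cell au1 av1) (A.cell b 0) (A.cell au2 av2)"
    "1 \<le> av1" "av1 \<le> a" "1 \<le> av2" "av2 \<le> a" using A.corner_b_pair by blast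
  obtain bu1 bv1 bu2 bv2 where
    pair_B: "shifted_edge_pair c a 2 (B.cell 0 0) (B.cell bu1 bv1) (B.cell a 0) (B.cell bu2 bv2)"
    "1 \<le> bv1" "bv1 \<le> a" "1 \<le> bv2" "bv2 \<le> a" using B.corner_a_pair by blast
  obtain cu1 cv1 cu2 cv2 where
    pair_C: "shifted_edge_pair c b 2 (C.cell 0 0) (C.cell cu1 cv1) (C.cell b 0) (C.cell cu2 cv2)"
    "1 \<le> cv1" "cv1 \<le> a" "1 \<le> cv2" "cv2 \<le> a" using C.corner_b_pair by blast
  obtain du1 dv1 du2 dv2 where
    pair_D: "shifted_edge_pair c a 2 (D.cell 0 0) (D.cell du1 dv1) (D.cell a 0) (D.cell du2 dv2)"
    "1 \<le> dv1" "dv1 \<le> a" "1 \<le> dv2" "dv2 \<le> a" using D.corner_a_pair by blast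
  let ?es = "[A.cell 0 0, A.cell b 0, B.cell 0 0, B.cell a 0, C.cell 0 0, C.cell b 0, D.cell 0 0, D.cell a 0]"
  let ?fs = "[A.cell au1 av1, A.cell au2 av2, B.cell bu1 bv1, B.cell bu2 bv2,
              C.cell cu1 cv1, C.cell cu2 cv2, D.cell du1 dv1, D.cell du2 dv2]"
  \<comment> \<open>the corner ends of the eight edges lie on the two horizontal sides, the other ends do not\<close>
  have es: "distinct ?es" "\<forall>e\<in>set ?es. e ! 1 = 1 \<or> e ! 1 = n2"
    using ab n by (simp_all add: A.cell_def B.cell_def C.cell_def D.cell_def)
  have fs: "\<forall>f\<in>set ?fs. \<not> (f ! 1 = 1 \<or> f ! 1 = n2)"
    using ab n pair_A(2-5) pair_B(2-5) pair_C(2-5) pair_D(2-5) by (simp add: A.cell_def B.cell_def C.cell_def D.cell_def)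
  have "distinct (map2 (\<lambda>e f. {e, f}) ?es ?fs)"
    by (rule distinct_doubletons[OF es(1) _ es(2) fs]) simp
  then have "distinct ([{A.cell 0 0, A.cell au1 av1}, {A.cell b 0, A.cell au2 av2},
      {B.cell 0 0, B.cell bu1 bv1}, {B.cell a 0, B.cell bu2 bv2}] @
    [{C.cell 0 0, C.cell cu1 cv1}, {C.cell b 0, C.cell cu2 cv2},
      {D.cell 0 0, D.cell du1 dv1}, {D.cell a 0, D.cell du2 dv2}])"
    by simp
  moreover have "length [n1, n2] = 2" by simp
  ultimately show ?thesis
    unfolding has_good_tour_def using tour pair_A(1) pair_B(1) pair_C(1) pair_D(1) by metis
qed

lemma has_good_tour_append:
  assumes ab: "0 < b" "b < a" and "coprime a b" and "\<forall>m\<in>set ms. a + b - 1 \<le> m"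
    and "has_good_tour a b ns"
  shows "has_good_tour a b (ns @ ms)"
  using assms(4)
proof (induction ms rule: rev_induct)
  case (snoc m ms)
  then show ?case using has_good_tour_snoc[OF ab \<open>coprime a b\<close>] by (simp flip: append_assoc)
qed (simp add: assms(5))

lemma has_ab_tour_if_has_good_tour: "has_good_tour a b ns \<Longrightarrow> has_ab_tour a b ns"
  unfolding has_good_tour_def has_ab_tour_def by blast

theorem theorem5p5:
  fixes \<alpha> \<beta> :: int and ns :: "int list"
  assumes "0 < \<beta>" and "\<beta> < \<alpha>"
    and "2 \<le> length ns"
    and "ns ! 0 \<ge> 2 * \<alpha> + 1" and "ns ! 1 \<ge> 2 * \<alpha> + 1"
    and "\<forall>i. 2 \<le> i \<and> i < length ns \<longrightarrow> ns ! i \<ge> \<alpha> + \<beta> - 1"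
    and "has_ab_tour \<alpha> \<beta> [ns ! 0, ns ! 1]"
  shows "has_ab_tour \<alpha> \<beta> ns"
proof -
  obtain c where c: "ab_tour \<alpha> \<beta> [ns ! 0, ns ! 1] c"
    using assms(7) unfolding has_ab_tour_def by blast
  have "coprime \<alpha> \<beta>" using coprime_of_planar_tour[OF assms(1,2) c] assms(1,2,4,5) by simp
  moreover have "has_good_tour \<alpha> \<beta> [ns ! 0, ns ! 1]"
    using has_good_tour_planar[OF assms(1,2) _ _ c] assms(4,5) by simp
  moreover have "\<forall>m\<in>set (drop 2 ns). \<alpha> + \<beta> - 1 \<le> m"
    using assms(6) by (auto simp: in_set_conv_nth)
  ultimately have "has_good_tour \<alpha> \<beta> ([ns ! 0, ns ! 1] @ drop 2 ns)"
    using has_good_tour_append[OF assms(1,2)] by blast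
  moreover have "[ns ! 0, ns ! 1] @ drop 2 ns = ns"
    using assms(3) by (cases ns; cases "tl ns") auto
  ultimately show ?thesis using has_ab_tour_if_has_good_tour by metis
qed

end
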